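(* Let $C$ be a field, $W$ a $C$-vector space of dimension $r$, and let $W_{i,j}$ ($i=1,\dots,n$; $j=1,\dots,\ell$, with $\ell\leq r$) be subspaces of $W$, given by bases, such that $W=\bigoplus_{j=1}^{\ell}W_{i,j}$ for each $i=1,\dots,n$. For a tuple $\mathbf k=(k_1,\dots,k_m)$ with $m\le n$ write $W_{\mathbf k}:=\bigcap_{i=1}^{m}W_{i,k_i}$. Consider the following algorithm: (1) set $U:=\{(j): 1\le j\le \ell,\ W_{1,j}\neq\{0\}\}$; (2) for $i=2,\dots,n$: set $U_{\mathrm{new}}:=\emptyset$; for each $j=1,\dots,\ell$ and each $\mathbf k\in U$, if $W_{\mathbf k}\cap W_{i,j}\neq\{0\}$ then add the tuple $(\mathbf k,j)$ (i.e. $\mathbf k$ with $j$ appended) to $U_{\mathrm{new}}$; afterwards set $U:=U_{\mathrm{new}}$; (3) return $U$. Then the algorithm is correct, i.e. it returns exactly the set of all tuples $\mathbf j=(j_1,\dots,j_n)\in\{1,\dots,\ell\}^n$ with $\bigcap_{i=1}^n W_{i,j_i}\neq\{0\}$, and, if bases of the spaces $W_{\mathbf k}$ for $\mathbf k\in U$ are cached (so that a basis of $W_{(\mathbf k,j)}=W_{\mathbf k}\cap W_{i,j}$ is available from the intersection test), it needs no more than $8nr^4$ operations in $C$.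
   Context: Operations are counted as arithmetic operations in $C$, with the convention that the intersection of two subspaces of $W$ of dimensions $d_1,d_2$ (given by bases, yielding a basis of the intersection) is computed, e.g. by Gaussian elimination, using no more than $\min(r,d_1+d_2)^2\max(r,d_1+d_2)$ operations in $C$. *)

theory Defs
  imports Complex_Main "HOL-Library.FuncSet"
begin

text \<open>The intersection W_k of a tuple k = (k_1,...,k_m) (a list), taken inside W;
  component number i (0-based list index) refers to the family i+1.\<close>
definition Wtup :: "'v set \<Rightarrow> (nat \<Rightarrow> nat \<Rightarrow> 'v set) \<Rightarrow> nat list \<Rightarrow> 'v set" where
  "Wtup W Ws ks = W \<inter> (\<Inter>i\<in>{..<length ks}. Ws (Suc i) (ks ! i))"

text \<open>Cost (number of operations in C) of intersecting two subspaces of dimensions d1, d2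
  of an r-dimensional space, as fixed by the paper's convention.\<close>
definition isect_cost :: "nat \<Rightarrow> nat \<Rightarrow> nat \<Rightarrow> nat" where
  "isect_cost r d1 d2 = (min r (d1 + d2))^2 * max r (d1 + d2)"

definition is_direct_sum ::
  "('a::field \<Rightarrow> 'v::ab_group_add \<Rightarrow> 'v) \<Rightarrow> 'v set \<Rightarrow> (nat \<Rightarrow> 'v set) \<Rightarrow> nat set \<Rightarrow> bool" where
  "is_direct_sum scale W Ws J \<longleftrightarrow>
     (\<forall>j\<in>J. module.subspace scale (Ws j) \<and> Ws j \<subseteq> W) \<and>
     (\<forall>v\<in>W. \<exists>!f. f \<in> (\<Pi>\<^sub>E j\<in>J. Ws j) \<and> v = (\<Sum>j\<in>J. f j))"

text \<open>Stage 1 only tests whether given bases are empty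
  (no arithmetic); in stage i \<ge> 2 each pair (k,j) with k in U costs one intersection
  W_k \<inter> W_{i,j} (bases of W_k being cached).\<close>
fun alg :: "('a::field \<Rightarrow> 'v::ab_group_add \<Rightarrow> 'v) \<Rightarrow> 'v set \<Rightarrow> (nat \<Rightarrow> nat \<Rightarrow> 'v set)
             \<Rightarrow> nat \<Rightarrow> nat \<Rightarrow> nat \<Rightarrow> nat list set \<times> nat" where
  "alg scale W Ws r l 0 = ({}, 0)"
| "alg scale W Ws r l (Suc 0) = ({[j] | j. j \<in> {1..l} \<and> Ws 1 j \<noteq> {0}}, 0)"
| "alg scale W Ws r l (Suc (Suc i)) =
     (let (U, c) = alg scale W Ws r l (Suc i) in
       ({k @ [j] | k j. k \<in> U \<and> j \<in> {1..l} \<and> Wtup W Ws k \<inter> Ws (Suc (Suc i)) j \<noteq> {0}},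
        c + (\<Sum>k\<in>U. \<Sum>j=1..l. isect_cost r (vector_space.dim scale (Wtup W Ws k))
                                          (vector_space.dim scale (Ws (Suc (Suc i)) j)))))"

end

theory Submission
  imports Defs "HOL-Library.Disjoint_Sets"
begin

text \<open>
  For a tuple k the spaces W_k \<inter> W_{i,j}, j = 1..l, lie in W_k and inherit independence from
  the decomposition of W into the W_{i,j}, so their dimensions add up to at most dim W_k.
  Inductively, the dimensions of all W_k with k of a fixed length add up to at most r, so at
  most r tuples survive each stage. The algorithm is correct because W_{(k,j)} = W_k \<inter> W_{i,j}
  can only be nonzero when W_k is. Bounding each intersection by r^2 (d_1 + d_2), a stage costs
  at most r^2 (l \<Sum>_k dim W_k + |U| \<Sum>_j dim W_{i,j}) \<le> 2 r^4, which gives 2 (n - 1) r^4 in total.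
\<close>

lemma sum_lists_length_Suc:
  "(\<Sum>xs | set xs \<subseteq> A \<and> length xs = Suc n. g xs) =
   (\<Sum>xs | set xs \<subseteq> A \<and> length xs = n. \<Sum>a\<in>A. g (xs @ [a]))"
proof -
  have "{xs. set xs \<subseteq> A \<and> length xs = Suc n} =
        (\<lambda>(xs, a). xs @ [a]) ` ({xs. set xs \<subseteq> A \<and> length xs = n} \<times> A)"
    by (auto simp: length_Suc_conv_rev)
  moreover have "inj_on (\<lambda>(xs, a). xs @ [a]) ({xs. set xs \<subseteq> A \<and> length xs = n} \<times> A)"
    by (auto simp: inj_on_def)
  ultimately show ?thesis
    by (simp add: sum.reindex sum.cartesian_product case_prod_beta')
qed

definition independent_subspaces :: "('i \<Rightarrow> 'v::comm_monoid_add set) \<Rightarrow> 'i set \<Rightarrow> bool" where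
  "independent_subspaces V J \<longleftrightarrow>
     (\<forall>f. (\<forall>j\<in>J. f j \<in> V j) \<longrightarrow> (\<Sum>j\<in>J. f j) = 0 \<longrightarrow> (\<forall>j\<in>J. f j = 0))"

lemma independent_subspacesD:
  "independent_subspaces V J \<Longrightarrow> (\<And>j. j \<in> J \<Longrightarrow> f j \<in> V j) \<Longrightarrow> (\<Sum>j\<in>J. f j) = 0
    \<Longrightarrow> j \<in> J \<Longrightarrow> f j = 0"
  unfolding independent_subspaces_def by blast

lemma independent_subspaces_mono:
  "independent_subspaces V J \<Longrightarrow> (\<And>j. j \<in> J \<Longrightarrow> V' j \<subseteq> V j) \<Longrightarrow> independent_subspaces V' J"
  unfolding independent_subspaces_def by blast

context vector_space
begin

lemma card_le_dim_if_independent: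
  assumes "finite F" "U \<subseteq> span F" "independent B" "B \<subseteq> U"
  shows "finite B \<and> card B \<le> dim U"
proof -
  obtain C where C: "C \<subseteq> U" "independent C" "U \<subseteq> span C" "card C = dim U"
    by (rule basis_exists)
  have "finite C" using independent_span_bound[OF assms(1) C(2)] C(1) assms(2) by blast
  then show ?thesis using independent_span_bound[OF _ assms(3)] C assms(4) by fastforce
qed

lemma dim_pos_if_nonzero:
  assumes "finite F" "U \<subseteq> span F" "x \<in> U" "x \<noteq> 0"
  shows "0 < dim U"
  using card_le_dim_if_independent[OF assms(1,2), of "{x}"] assms(3,4) by simp

lemma disjoint_bases_of_independent_subspaces:
  assumes ind: "independent_subspaces V J"
    and V: "\<And>j. j \<in> J \<Longrightarrow> subspace (V j)"
    and B: "\<And>j. j \<in> J \<Longrightarrow> B j \<subseteq> V j" "\<And>j. j \<in> J \<Longrightarrow> independent (B j)"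
    and fin: "finite J"
  shows "disjoint_family_on B J"
  unfolding disjoint_family_on_def
proof (intro ballI impI, rule ccontr)
  fix a b assume ab: "a \<in> J" "b \<in> J" "a \<noteq> b" and "B a \<inter> B b \<noteq> {}"
  then obtain v where v: "v \<in> B a" "v \<in> B b" by blast
  define f where "f = (\<lambda>j. if j = a then v else if j = b then -v else 0)"
  have "(\<Sum>j\<in>J. f j) = (\<Sum>j\<in>J. (if j = a then v else 0) + (if j = b then -v else 0))"
    by (rule sum.cong) (auto simp: f_def ab)
  also have "\<dots> = 0" by (simp add: sum.distrib ab fin)
  finally have "f a = 0"
    using v B(1) V subspace_neg subspace_0 ab
    by (intro independent_subspacesD[OF ind, of f]) (auto simp: f_def subset_iff)
  then have "v = 0" by (simp add: f_def)
  with v B(2) ab dependent_zero show False by blast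
qed

lemma independent_UN_bases_of_independent_subspaces:
  assumes ind: "independent_subspaces V J"
    and V: "\<And>j. j \<in> J \<Longrightarrow> subspace (V j)"
    and B: "\<And>j. j \<in> J \<Longrightarrow> B j \<subseteq> V j" "\<And>j. j \<in> J \<Longrightarrow> independent (B j)"
    and fin: "finite J"
  shows "independent (\<Union>j\<in>J. B j)"
  unfolding independent_explicit_finite_subsets
proof (intro allI impI ballI)
  fix S u v assume S: "S \<subseteq> (\<Union>j\<in>J. B j)" "finite S"
    and sum0: "(\<Sum>v\<in>S. u v *s v) = 0" and v: "v \<in> S"
  define f where "f j = (\<Sum>w\<in>S \<inter> B j. u w *s w)" for j
  have disj: "disjoint_family_on B J"
    by (rule disjoint_bases_of_independent_subspaces[OF ind V B fin])
  have "(\<Sum>j\<in>J. f j) = (\<Sum>w\<in>(\<Union>j\<in>J. S \<inter> B j). u w *s w)"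
    unfolding f_def
    by (rule sum.UNION_disjoint[symmetric]) (use fin S disj in \<open>auto simp: disjoint_family_on_def\<close>)
  also have "(\<Union>j\<in>J. S \<inter> B j) = S" using S by blast
  finally have "(\<Sum>j\<in>J. f j) = 0" using sum0 by simp
  moreover have "f j \<in> V j" if "j \<in> J" for j
    unfolding f_def using B(1)[OF that] V[OF that]
    by (intro subspace_sum) (auto intro: subspace_scale)
  moreover obtain j where j: "j \<in> J" "v \<in> B j" using S v by blast
  ultimately have "f j = 0" using independent_subspacesD[OF ind] by blast
  with B(2)[OF j(1)] show "u v = 0"
    unfolding f_def independent_explicit_finite_subsets using S j v by auto
qed

lemma sum_dim_le_dim_if_independent_subspaces:
  assumes ind: "independent_subspaces V J"
    and V: "\<And>j. j \<in> J \<Longrightarrow> subspace (V j)" "\<And>j. j \<in> J \<Longrightarrow> V j \<subseteq> U"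
    and U: "finite F" "U \<subseteq> span F"
    and fin: "finite J"
  shows "(\<Sum>j\<in>J. dim (V j)) \<le> dim U"
proof -
  have "\<forall>j. \<exists>B. B \<subseteq> V j \<and> independent B \<and> V j \<subseteq> span B \<and> card B = dim (V j)"
    by (metis basis_exists)
  then obtain B where B: "\<And>j. B j \<subseteq> V j" "\<And>j. independent (B j)"
    "\<And>j. V j \<subseteq> span (B j)" "\<And>j. card (B j) = dim (V j)" by metis
  have "independent (\<Union>j\<in>J. B j)"
    by (rule independent_UN_bases_of_independent_subspaces[OF ind V(1) B(1,2) fin])
  moreover have "(\<Union>j\<in>J. B j) \<subseteq> U" using B(1) V(2) by blast
  ultimately have "finite (\<Union>j\<in>J. B j)" "card (\<Union>j\<in>J. B j) \<le> dim U"
    using card_le_dim_if_independent[OF U] by blast+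
  moreover have "card (\<Union>j\<in>J. B j) = (\<Sum>j\<in>J. card (B j))"
    using disjoint_bases_of_independent_subspaces[OF ind V(1) B(1,2) fin] fin
      \<open>finite (\<Union>j\<in>J. B j)\<close>
    by (intro card_UN_disjoint') (auto intro: finite_subset)
  ultimately show ?thesis using B(4) by simp
qed

lemma independent_subspaces_if_is_direct_sum:
  assumes "subspace W" "is_direct_sum scale W V J"
  shows "independent_subspaces V J"
  unfolding independent_subspaces_def
proof (intro allI impI ballI)
  fix f j assume f: "\<forall>j\<in>J. f j \<in> V j" and sum0: "(\<Sum>j\<in>J. f j) = 0" and j: "j \<in> J"
  have V0: "\<forall>j\<in>J. 0 \<in> V j" using assms(2) subspace_0 unfolding is_direct_sum_def by blast
  have "\<exists>!g. g \<in> (\<Pi>\<^sub>E j\<in>J. V j) \<and> 0 = (\<Sum>j\<in>J. g j)"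
    using assms subspace_0 unfolding is_direct_sum_def by blast
  moreover have "restrict f J \<in> (\<Pi>\<^sub>E j\<in>J. V j) \<and> 0 = (\<Sum>j\<in>J. restrict f J j)"
    using f sum0 by simp
  moreover have "(\<lambda>j\<in>J. 0) \<in> (\<Pi>\<^sub>E j\<in>J. V j) \<and> 0 = (\<Sum>j\<in>J. (\<lambda>j\<in>J. 0::'b) j)"
    using V0 by simp
  ultimately have "restrict f J = (\<lambda>j\<in>J. 0)" by blast
  then show "f j = 0" using j by (metis restrict_apply')
qed

end

lemma Wtup_Nil [simp]: "Wtup W Ws [] = W"
  unfolding Wtup_def by simp

lemma Wtup_snoc: "Wtup W Ws (k @ [j]) = Wtup W Ws k \<inter> Ws (Suc (length k)) j"
proof -
  have "(\<Inter>i<length k. Ws (Suc i) ((k @ [j]) ! i)) = (\<Inter>i<length k. Ws (Suc i) (k ! i))"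
    by (rule INF_cong) (auto simp: nth_append)
  then show ?thesis unfolding Wtup_def by (auto simp: lessThan_Suc)
qed

lemma fst_alg_Suc_Suc:
  "fst (alg scale W Ws r l (Suc (Suc i))) =
     {k @ [j] | k j. k \<in> fst (alg scale W Ws r l (Suc i)) \<and> j \<in> {1..l} \<and>
                     Wtup W Ws k \<inter> Ws (Suc (Suc i)) j \<noteq> {0}}"
  by (simp add: case_prod_beta)

lemma snd_alg_Suc_Suc:
  "snd (alg scale W Ws r l (Suc (Suc i))) = snd (alg scale W Ws r l (Suc i)) +
     (\<Sum>k\<in>fst (alg scale W Ws r l (Suc i)). \<Sum>j=1..l.
        isect_cost r (vector_space.dim scale (Wtup W Ws k))
                     (vector_space.dim scale (Ws (Suc (Suc i)) j)))"
  by (simp add: case_prod_beta)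

lemma isect_cost_le: "isect_cost r a b \<le> r^2 * (a + b)"
proof (cases "a + b \<le> r")
  case True
  then have "(a + b) * (a + b) * r \<le> r * (a + b) * r" by (intro mult_le_mono) auto
  with True show ?thesis by (simp add: isect_cost_def power2_eq_square algebra_simps)
next
  case False
  then show ?thesis by (simp add: isect_cost_def power2_eq_square algebra_simps)
qed

definition tuples :: "nat \<Rightarrow> nat \<Rightarrow> nat list set" where
  "tuples l m = {ks. set ks \<subseteq> {1..l} \<and> length ks = m}"

lemma finite_tuples: "finite (tuples l m)"
  unfolding tuples_def by (rule finite_lists_length_eq) simp

lemma snoc_in_tuples_iff: "k @ [j] \<in> tuples l (Suc m) \<longleftrightarrow> k \<in> tuples l m \<and> j \<in> {1..l}"
  unfolding tuples_def by auto

lemma sum_tuples_Suc: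
  "(\<Sum>k\<in>tuples l (Suc m). g k) = (\<Sum>k\<in>tuples l m. \<Sum>j=1..l. g (k @ [j]))"
  unfolding tuples_def by (rule sum_lists_length_Suc)

locale subspace_decompositions = vector_space scale
  for scale :: "'a::field \<Rightarrow> 'v::ab_group_add \<Rightarrow> 'v" +
  fixes W :: "'v set" and Ws :: "nat \<Rightarrow> nat \<Rightarrow> 'v set" and l n :: nat
  assumes W_subspace: "subspace W"
    and W_finite_dim: "\<exists>F. finite F \<and> W \<subseteq> span F"
    and Ws_direct_sum: "\<And>i. i \<in> {1..n} \<Longrightarrow> is_direct_sum scale W (Ws i) {1..l}"
begin

lemma Ws_subspace: "i \<in> {1..n} \<Longrightarrow> j \<in> {1..l} \<Longrightarrow> subspace (Ws i j)"
  using Ws_direct_sum unfolding is_direct_sum_def by blast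

lemma Ws_subset: "i \<in> {1..n} \<Longrightarrow> j \<in> {1..l} \<Longrightarrow> Ws i j \<subseteq> W"
  using Ws_direct_sum unfolding is_direct_sum_def by blast

lemma Ws_independent: "i \<in> {1..n} \<Longrightarrow> independent_subspaces (Ws i) {1..l}"
  by (rule independent_subspaces_if_is_direct_sum[OF W_subspace Ws_direct_sum])

lemma Wtup_subspace: "k \<in> tuples l m \<Longrightarrow> m \<le> n \<Longrightarrow> subspace (Wtup W Ws k)"
proof (induction k arbitrary: m rule: rev_induct)
  case Nil
  then show ?case using W_subspace by simp
next
  case (snoc j k)
  then have "k \<in> tuples l (length k)" "Suc (length k) \<in> {1..n}" "j \<in> {1..l}"
    by (auto simp: tuples_def)
  with snoc.IH show ?case by (simp add: Wtup_snoc subspace_inter Ws_subspace)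
qed

lemma sum_dim_Ws_le:
  assumes i: "i \<in> {1..n}"
  shows "(\<Sum>j=1..l. dim (Ws i j)) \<le> dim W"
proof -
  obtain F where "finite F" "W \<subseteq> span F" using W_finite_dim by blast
  then show ?thesis
    using Ws_independent[OF i] Ws_subspace[OF i] Ws_subset[OF i]
    by (intro sum_dim_le_dim_if_independent_subspaces) auto
qed

lemma sum_dim_Wtup_le: "m \<le> n \<Longrightarrow> (\<Sum>k\<in>tuples l m. dim (Wtup W Ws k)) \<le> dim W"
proof (induction m)
  case 0
  have "tuples l 0 = {[]}" by (auto simp: tuples_def)
  then show ?case by simp
next
  case (Suc m)
  have "(\<Sum>k\<in>tuples l (Suc m). dim (Wtup W Ws k)) =
        (\<Sum>k\<in>tuples l m. \<Sum>j=1..l. dim (Wtup W Ws k \<inter> Ws (Suc m) j))"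
    unfolding sum_tuples_Suc by (intro sum.cong refl) (simp add: Wtup_snoc tuples_def)
  also have "\<dots> \<le> (\<Sum>k\<in>tuples l m. dim (Wtup W Ws k))"
  proof (rule sum_mono)
    fix k assume k: "k \<in> tuples l m"
    have i: "Suc m \<in> {1..n}" using Suc.prems by simp
    obtain F where "finite F" "W \<subseteq> span F" using W_finite_dim by blast
    then show "(\<Sum>j=1..l. dim (Wtup W Ws k \<inter> Ws (Suc m) j)) \<le> dim (Wtup W Ws k)"
      using Wtup_subspace[OF k] Suc.prems Ws_subspace[OF i]
        independent_subspaces_mono[OF Ws_independent[OF i]]
      by (intro sum_dim_le_dim_if_independent_subspaces[where F = F])
        (auto simp: Wtup_def intro: subspace_inter)
  qed
  also have "\<dots> \<le> dim W" using Suc by simp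
  finally show ?case .
qed

lemma dim_Wtup_pos:
  assumes "k \<in> tuples l m" "m \<le> n" "Wtup W Ws k \<noteq> {0}"
  shows "0 < dim (Wtup W Ws k)"
proof -
  have "0 \<in> Wtup W Ws k" using Wtup_subspace[OF assms(1,2)] by (rule subspace_0)
  then obtain x where "x \<in> Wtup W Ws k" "x \<noteq> 0" using assms(3) by blast
  moreover obtain F where "finite F" "W \<subseteq> span F" using W_finite_dim by blast
  ultimately show ?thesis by (intro dim_pos_if_nonzero[of F _ x]) (auto simp: Wtup_def)
qed

lemma card_nonzero_tuples_le:
  assumes "m \<le> n"
  shows "card {k \<in> tuples l m. Wtup W Ws k \<noteq> {0}} \<le> dim W"
proof -
  have "card {k \<in> tuples l m. Wtup W Ws k \<noteq> {0}} =
        (\<Sum>k\<in>{k \<in> tuples l m. Wtup W Ws k \<noteq> {0}}. 1)"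
    by simp
  also have "\<dots> \<le> (\<Sum>k\<in>{k \<in> tuples l m. Wtup W Ws k \<noteq> {0}}. dim (Wtup W Ws k))"
    using dim_Wtup_pos[OF _ assms]
    by (intro sum_mono) (metis (mono_tags) Suc_leI mem_Collect_eq One_nat_def)
  also have "\<dots> \<le> (\<Sum>k\<in>tuples l m. dim (Wtup W Ws k))"
    by (intro sum_mono2 finite_tuples) auto
  also have "\<dots> \<le> dim W" using sum_dim_Wtup_le[OF assms] .
  finally show ?thesis .
qed

lemma nonzero_tuples_Suc:
  assumes "Suc m \<le> n"
  shows "{k @ [j] | k j. k \<in> {k \<in> tuples l m. Wtup W Ws k \<noteq> {0}} \<and> j \<in> {1..l} \<and>
                         Wtup W Ws k \<inter> Ws (Suc m) j \<noteq> {0}}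
         = {k \<in> tuples l (Suc m). Wtup W Ws k \<noteq> {0}}"
proof (intro equalityI subsetI)
  fix k' assume "k' \<in> {k \<in> tuples l (Suc m). Wtup W Ws k \<noteq> {0}}"
  moreover from this obtain k j where k': "k' = k @ [j]"
    by (auto simp: tuples_def length_Suc_conv_rev)
  ultimately have k: "k \<in> tuples l m" "j \<in> {1..l}"
    and nz: "Wtup W Ws k \<inter> Ws (Suc m) j \<noteq> {0}"
    by (auto simp: snoc_in_tuples_iff Wtup_snoc tuples_def)
  have "0 \<in> Ws (Suc m) j" using assms k(2) by (intro subspace_0 Ws_subspace) auto
  with nz have "Wtup W Ws k \<noteq> {0}" by blast
  with k k' nz show "k' \<in> {k @ [j] | k j. k \<in> {k \<in> tuples l m. Wtup W Ws k \<noteq> {0}} \<and>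
                      j \<in> {1..l} \<and> Wtup W Ws k \<inter> Ws (Suc m) j \<noteq> {0}}" by blast
qed (auto simp: snoc_in_tuples_iff Wtup_snoc tuples_def)

lemma fst_alg:
  assumes "1 \<le> m" "m \<le> n"
  shows "fst (alg scale W Ws r l m) = {k \<in> tuples l m. Wtup W Ws k \<noteq> {0}}"
  using assms
proof (induction m rule: nat_induct_at_least)
  case base
  have "Wtup W Ws [j] = Ws 1 j" if "j \<in> {1..l}" for j
    using Wtup_snoc[of W Ws "[]" j] Ws_subset[of 1 j] that base by auto
  then show ?case by (auto simp: tuples_def length_Suc_conv)
next
  case (Suc m)
  then obtain i where "m = Suc i" by (cases m) auto
  with Suc show ?case
    by (simp only: fst_alg_Suc_Suc nonzero_tuples_Suc[symmetric])
qed

lemma stage_cost_le: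
  assumes l: "l \<le> dim W" and m: "Suc m \<le> n"
  shows "(\<Sum>k\<in>{k \<in> tuples l m. Wtup W Ws k \<noteq> {0}}. \<Sum>j=1..l.
            isect_cost (dim W) (dim (Wtup W Ws k)) (dim (Ws (Suc m) j))) \<le> 2 * dim W ^ 4"
proof -
  define r where "r = dim W"
  define N where "N = {k \<in> tuples l m. Wtup W Ws k \<noteq> {0}}"
  define d where "d k = dim (Wtup W Ws k)" for k
  define e where "e j = dim (Ws (Suc m) j)" for j
  have sum_d: "(\<Sum>k\<in>N. d k) \<le> r"
  proof -
    have "(\<Sum>k\<in>N. d k) \<le> (\<Sum>k\<in>tuples l m. d k)"
      unfolding N_def by (intro sum_mono2 finite_tuples) auto
    also have "\<dots> \<le> r" unfolding d_def r_def using m by (intro sum_dim_Wtup_le) simp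
    finally show ?thesis .
  qed
  have card_N: "card N \<le> r" unfolding N_def r_def using m by (intro card_nonzero_tuples_le) simp
  have sum_e: "(\<Sum>j=1..l. e j) \<le> r" unfolding e_def r_def using m by (intro sum_dim_Ws_le) simp
  have "(\<Sum>k\<in>N. \<Sum>j=1..l. isect_cost r (d k) (e j)) \<le> (\<Sum>k\<in>N. \<Sum>j=1..l. r^2 * (d k + e j))"
    by (intro sum_mono isect_cost_le)
  also have "\<dots> = r^2 * (l * (\<Sum>k\<in>N. d k) + card N * (\<Sum>j=1..l. e j))"
    by (simp add: sum.distrib sum_distrib_left[symmetric] sum_distrib_right[symmetric] algebra_simps)
  also have "\<dots> \<le> r^2 * (r * r + r * r)"
    using sum_d card_N sum_e l unfolding r_def by (intro mult_le_mono2 add_mono mult_le_mono) auto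
  also have "\<dots> = 2 * r^4" by (simp add: power_def algebra_simps)
  finally show ?thesis unfolding r_def N_def d_def e_def .
qed

lemma snd_alg_le:
  assumes "l \<le> dim W" "1 \<le> m" "m \<le> n"
  shows "snd (alg scale W Ws (dim W) l m) \<le> 2 * (m - 1) * dim W ^ 4"
  using assms(2,3)
proof (induction m rule: nat_induct_at_least)
  case base
  then show ?case by simp
next
  case (Suc m)
  then obtain i where i: "m = Suc i" by (cases m) auto
  have "snd (alg scale W Ws (dim W) l (Suc m)) \<le> 2 * (m - 1) * dim W ^ 4 + 2 * dim W ^ 4"
    using Suc stage_cost_le[OF assms(1) Suc.prems] fst_alg[of m]
    unfolding i snd_alg_Suc_Suc by (intro add_mono) simp_all
  then show ?case using i by (simp add: algebra_simps)
qed

lemma Inter_eq_Wtup: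
  assumes "js \<in> tuples l n" "1 \<le> n"
  shows "(\<Inter>i\<in>{1..n}. Ws i (js ! (i - 1))) = Wtup W Ws js"
proof -
  have len: "length js = n" using assms(1) by (simp add: tuples_def)
  have "{1..n} = Suc ` {..<n}" by (simp add: image_Suc_lessThan)
  then have eq: "(\<Inter>i\<in>{1..n}. Ws i (js ! (i - 1))) = (\<Inter>i<n. Ws (Suc i) (js ! i))" by simp
  have "js ! 0 \<in> set js" using assms(2) len by simp
  then have "js ! 0 \<in> {1..l}" using assms(1) by (auto simp: tuples_def)
  then have "(\<Inter>i<n. Ws (Suc i) (js ! i)) \<subseteq> W"
    using assms(2) Ws_subset[of 1 "js ! 0"] by (intro INF_lower2[of 0]) auto
  then show ?thesis unfolding eq Wtup_def len by blast
qed

end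

theorem theorem1:
  fixes scale :: "'a::field \<Rightarrow> 'v::ab_group_add \<Rightarrow> 'v"
    and W :: "'v set" and Ws :: "nat \<Rightarrow> nat \<Rightarrow> 'v set"
    and r l n :: nat
  assumes vs: "vector_space scale"
    and W_sub: "module.subspace scale W"
    and W_fin: "\<exists>B. finite B \<and> B \<subseteq> W \<and> module.span scale B = W"
    and W_dim: "vector_space.dim scale W = r"
    and l_le: "l \<le> r"
    and n_pos: "1 \<le> n"
    and dsum: "\<And>i. i \<in> {1..n} \<Longrightarrow> is_direct_sum scale W (Ws i) {1..l}"
  shows "fst (alg scale W Ws r l n) =
           {js. length js = n \<and> set js \<subseteq> {1..l} \<and>
                (\<Inter>i\<in>{1..n}. Ws i (js ! (i - 1))) \<noteq> {0}}
         \<and> snd (alg scale W Ws r l n) \<le> 8 * n * r ^ 4"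
proof -
  interpret subspace_decompositions scale W Ws l n
  proof
    show "\<exists>F. finite F \<and> W \<subseteq> module.span scale F" using W_fin by blast
  qed (use vs W_sub dsum in \<open>simp_all add: vector_space_def\<close>)
  have "fst (alg scale W Ws r l n) = {js \<in> tuples l n. Wtup W Ws js \<noteq> {0}}"
    using fst_alg n_pos by simp
  moreover have "{js \<in> tuples l n. Wtup W Ws js \<noteq> {0}} =
      {js. length js = n \<and> set js \<subseteq> {1..l} \<and> (\<Inter>i\<in>{1..n}. Ws i (js ! (i - 1))) \<noteq> {0}}"
    using Inter_eq_Wtup n_pos by (auto simp: tuples_def)
  moreover have "snd (alg scale W Ws r l n) \<le> 2 * (n - 1) * r ^ 4"
    using snd_alg_le l_le n_pos W_dim by blast
  moreover have "2 * (n - 1) * r ^ 4 \<le> 8 * n * r ^ 4" by (intro mult_le_mono1) simp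
  ultimately show ?thesis by (metis order_trans)
qed

end
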